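(* Let $T$ be a tree with root edge whose leaves are $1,\dots,m$, and let $L:G\to\mathcal{L}$ be a labeling function on a finite abelian group $G$. Let $J_{T,L}$ be the kernel of the $\mathbb{C}$-algebra homomorphism $$\mathbb{C}[q_{g}: g=(g_1,\dots,g_m)\in G^m]\to\mathbb{C}[a^{(e)}_l: e\in E(T),\, l\in\mathcal{L}],\qquad q_{g}\mapsto\prod_{e\in E(T)}a^{(e)}_{L(h_g(e))}.$$ Then the $\mathbb{C}$-vector space of polynomials of degree at most one lying in $J_{T,L}$ is spanned by all differences $q_{g}-q_{g'}$ with $g,g'\in G^m$ such that $L(h_g(e))=L(h_{g'}(e))$ for all edges $e\in E(T)$.
   Context: Let $G$ be a finite abelian group written additively, $\mathcal{L}$ a finite set, and $L:G\to\mathcal{L}$ any function (a labeling function). A tree with root edge is a finite tree $T$ with a distinguished leaf $\rho$; the unique edge $e_r$ at $\rho$ is the root edge. Every vertex $v\neq\rho$ has a unique parent edge (the first edge on the path from $v$ to $\rho$); the other edges at $v$ are its child edges. The leaves of $T$ other than $\rho$ are called the leaves of $T$; vertices that are neither $\rho$ nor leaves are interior vertices. $E(T)$ is the edge set. An edge $e'$ is below an edge $e$ if $e$ lies on the path from $\rho$ to $e'$ (in particular $e$ is below $e$). For $g=(g_1,\dots,g_m)\in G^m$, define $h_g:E(T)\to G$ by $h_g(e)=\sum_{i\in\Lambda(e)}g_i$, where $\Lambda(e)$ is the set of leaves $i$ whose incident edge is below $e$. All $a^{(e)}_l$ are distinct indeterminates. *)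

theory Defs
  imports Complex_Main "HOL-Library.Poly_Mapping"
begin

definition adj :: "'v set set \<Rightarrow> 'v \<Rightarrow> 'v \<Rightarrow> bool" where
  "adj E u v \<longleftrightarrow> {u, v} \<in> E \<and> u \<noteq> v"

definition is_tree :: "'v set \<Rightarrow> 'v set set \<Rightarrow> bool" where
  "is_tree V E \<longleftrightarrow> finite V \<and> V \<noteq> {} \<and>
     (\<forall>e\<in>E. \<exists>u v. u \<in> V \<and> v \<in> V \<and> u \<noteq> v \<and> e = {u, v}) \<and>
     (\<forall>u\<in>V. \<forall>v\<in>V. (adj E)\<^sup>*\<^sup>* u v) \<and>
     card E + 1 = card V"

definition vdeg :: "'v set set \<Rightarrow> 'v \<Rightarrow> nat" where
  "vdeg E v = card {e \<in> E. v \<in> e}"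

text \<open>Tree with root edge: a tree with a distinguished leaf rho; the remaining leaves
  are bijectively labelled by the finite index type 'm (playing the role of 1..m).\<close>
definition tree_with_root_edge ::
  "'v set \<Rightarrow> 'v set set \<Rightarrow> 'v \<Rightarrow> ('m \<Rightarrow> 'v) \<Rightarrow> bool" where
  "tree_with_root_edge V E \<rho> lf \<longleftrightarrow> is_tree V E \<and> \<rho> \<in> V \<and> vdeg E \<rho> = 1 \<and>
     bij_betw lf UNIV {v \<in> V. v \<noteq> \<rho> \<and> vdeg E v = 1}"

definition simple_path :: "'v set set \<Rightarrow> 'v list \<Rightarrow> bool" where
  "simple_path E vs \<longleftrightarrow> vs \<noteq> [] \<and> distinct vs \<and>
     (\<forall>k. Suc k < length vs \<longrightarrow> {vs ! k, vs ! Suc k} \<in> E)"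

definition path_edges :: "'v list \<Rightarrow> 'v set set" where
  "path_edges vs = {{vs ! k, vs ! Suc k} | k. Suc k < length vs}"

text \<open>e' is below e iff e lies on the path from rho to e' (i.e. on a simple path starting
  at rho whose last edge is e').\<close>
definition below :: "'v set set \<Rightarrow> 'v \<Rightarrow> 'v set \<Rightarrow> 'v set \<Rightarrow> bool" where
  "below E \<rho> e' e \<longleftrightarrow> (\<exists>vs. simple_path E vs \<and> hd vs = \<rho> \<and> length vs \<ge> 2 \<and>
      {vs ! (length vs - 2), last vs} = e' \<and> e \<in> path_edges vs)"

definition leaf_edge :: "'v set set \<Rightarrow> 'v \<Rightarrow> 'v set" where
  "leaf_edge E v = (THE e. e \<in> E \<and> v \<in> e)"

definition Lambda :: "'v set set \<Rightarrow> 'v \<Rightarrow> ('m \<Rightarrow> 'v) \<Rightarrow> 'v set \<Rightarrow> 'm set" where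
  "Lambda E \<rho> lf e = {i. below E \<rho> (leaf_edge E (lf i)) e}"

definition hmap :: "'v set set \<Rightarrow> 'v \<Rightarrow> ('m \<Rightarrow> 'v) \<Rightarrow> ('m \<Rightarrow> 'g::comm_monoid_add) \<Rightarrow> 'v set \<Rightarrow> 'g" where
  "hmap E \<rho> lf g e = (\<Sum>i\<in>Lambda E \<rho> lf e. g i)"

type_synonym 'x cpoly = "('x \<Rightarrow>\<^sub>0 nat) \<Rightarrow>\<^sub>0 complex"

definition pvar :: "'x \<Rightarrow> 'x cpoly" where
  "pvar x = Poly_Mapping.single (Poly_Mapping.single x 1) 1"

definition pconst :: "complex \<Rightarrow> 'x cpoly" where
  "pconst c = Poly_Mapping.single 0 c"

definition total_degree :: "'x cpoly \<Rightarrow> nat" where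
  "total_degree p = Max (insert 0 ((\<lambda>mo. \<Sum>x\<in>Poly_Mapping.keys mo. Poly_Mapping.lookup mo x) ` Poly_Mapping.keys p))"

definition peval :: "('x \<Rightarrow> 'y cpoly) \<Rightarrow> 'x cpoly \<Rightarrow> 'y cpoly" where
  "peval img p = (\<Sum>mo\<in>Poly_Mapping.keys p. pconst (Poly_Mapping.lookup p mo) * (\<Prod>x\<in>Poly_Mapping.keys mo. img x ^ Poly_Mapping.lookup mo x))"

text \<open>q_g \<mapsto> prod over edges e of a^(e)_{L(h_g(e))}; variables a^(e)_l are pairs (e,l).\<close>
definition phiTL :: "'v set set \<Rightarrow> 'v \<Rightarrow> ('m \<Rightarrow> 'v) \<Rightarrow> ('g::comm_monoid_add \<Rightarrow> 'l)
    \<Rightarrow> ('m \<Rightarrow> 'g) cpoly \<Rightarrow> ('v set \<times> 'l) cpoly" where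
  "phiTL E \<rho> lf L = peval (\<lambda>g. \<Prod>e\<in>E. pvar (e, L (hmap E \<rho> lf g e)))"

definition J_TL :: "'v set set \<Rightarrow> 'v \<Rightarrow> ('m \<Rightarrow> 'v) \<Rightarrow> ('g::comm_monoid_add \<Rightarrow> 'l)
    \<Rightarrow> ('m \<Rightarrow> 'g) cpoly set" where
  "J_TL E \<rho> lf L = {p. phiTL E \<rho> lf L p = 0}"

end

(*
  Every variable q_g is mapped to a single monomial, whose exponent records the label
  L(h_g(e)) on each edge e; so q_g and q_g' have the same image exactly when their edge
  labellings agree, and no image is constant because the tree has an edge. A polynomial
  c_0 + sum_g c_g q_g then lies in the kernel iff c_0 = 0 and the coefficients c_g sum to
  zero over each fibre of g |-> (image of q_g). Choosing a representative r(g) in each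
  fibre, such a form equals sum_g c_g (q_g - q_r(g)), because the subtracted terms add
  up fibrewise to zero.
*)

theory Submission
  imports Defs
begin

lemma pconst_0 [simp]: "pconst 0 = 0"
  by (simp add: pconst_def)

lemma pconst_add: "pconst (a + b) = pconst a + pconst b"
  by (simp add: pconst_def single_add)

lemma pconst_diff: "pconst (a - b) = pconst a - pconst b"
  by (simp add: pconst_def single_diff)

lemma pconst_sum: "pconst (sum f A) = (\<Sum>x\<in>A. pconst (f x))"
  by (induction A rule: infinite_finite_induct) (simp_all add: pconst_add)

lemma pconst_mult_single: "pconst c * Poly_Mapping.single m d = Poly_Mapping.single m (c * d)"
  by (simp add: pconst_def mult_single)

lemma pconst_mult_pvar: "pconst c * pvar x = Poly_Mapping.single (Poly_Mapping.single x 1) c"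
  by (simp add: pvar_def pconst_mult_single)

lemma lookup_sum_single:
  assumes "finite A"
  shows "Poly_Mapping.lookup (\<Sum>x\<in>A. Poly_Mapping.single (f x) (a x)) k
       = (\<Sum>x | x \<in> A \<and> f x = k. a x)"
  using sum.inter_filter[OF assms, of a "\<lambda>x. f x = k"]
  by (simp add: lookup_sum lookup_single when_def)

lemma single_eq_0_iff [simp]: "Poly_Mapping.single k v = 0 \<longleftrightarrow> v = 0"
  by (metis lookup_single_eq lookup_zero single_zero)

lemma single_eq_single_iff [simp]:
  "Poly_Mapping.single k v = Poly_Mapping.single k' v \<longleftrightarrow> v = 0 \<or> k = k'"
  by (metis lookup_single_eq lookup_single_not_eq single_zero)

lemma prod_single_one:
  "(\<Prod>x\<in>A. Poly_Mapping.single (f x) (1::'a::comm_semiring_1)) = Poly_Mapping.single (sum f A) 1"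
  by (induction A rule: infinite_finite_induct) (auto simp: mult_single)

lemma peval_eq_sum_superset:
  assumes "finite S" "Poly_Mapping.keys p \<subseteq> S"
  shows "peval img p = (\<Sum>mo\<in>S. pconst (Poly_Mapping.lookup p mo) *
           (\<Prod>x\<in>Poly_Mapping.keys mo. img x ^ Poly_Mapping.lookup mo x))"
  unfolding peval_def
  by (rule sum.mono_neutral_left[OF assms]) (auto simp: pconst_def in_keys_iff)

lemma peval_add: "peval img (p + q) = peval img p + peval img q"
proof -
  let ?S = "Poly_Mapping.keys p \<union> Poly_Mapping.keys q"
  have "finite ?S" by simp
  then show ?thesis
    by (simp add: peval_eq_sum_superset[of ?S] keys_add lookup_add pconst_add
        distrib_right sum.distrib)
qed

lemma peval_diff: "peval img (p - q) = peval img p - peval img q"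
proof -
  let ?S = "Poly_Mapping.keys p \<union> Poly_Mapping.keys q"
  have "finite ?S" by simp
  then show ?thesis
    by (simp add: peval_eq_sum_superset[of ?S] keys_diff lookup_minus pconst_diff
        left_diff_distrib sum_subtractf)
qed

lemma peval_0 [simp]: "peval img 0 = 0"
  by (simp add: peval_def)

lemma peval_sum: "peval img (sum f A) = (\<Sum>x\<in>A. peval img (f x))"
  by (induction A rule: infinite_finite_induct) (simp_all add: peval_add)

lemma peval_pconst: "peval img (pconst c) = pconst c"
  by (cases "c = 0") (simp_all add: peval_def pconst_def)

lemma peval_pconst_mult_pvar: "peval img (pconst c * pvar x) = pconst c * img x"
  unfolding pconst_mult_pvar by (cases "c = 0") (simp_all add: peval_def pconst_def)

lemma monomial_degree_le_1_iff:
  fixes mo :: "'x \<Rightarrow>\<^sub>0 nat"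
  shows "(\<Sum>x\<in>Poly_Mapping.keys mo. Poly_Mapping.lookup mo x) \<le> 1
     \<longleftrightarrow> mo = 0 \<or> (\<exists>x. mo = Poly_Mapping.single x 1)"
proof
  assume deg: "(\<Sum>x\<in>Poly_Mapping.keys mo. Poly_Mapping.lookup mo x) \<le> 1"
  have pos: "\<forall>x\<in>Poly_Mapping.keys mo. 1 \<le> Poly_Mapping.lookup mo x"
    by (simp add: in_keys_iff Suc_le_eq)
  then have "card (Poly_Mapping.keys mo) \<le> 1"
    using sum_bounded_below[of "Poly_Mapping.keys mo" 1 "Poly_Mapping.lookup mo"] deg by simp
  then consider "Poly_Mapping.keys mo = {}" | x where "Poly_Mapping.keys mo = {x}"
    by (metis card_1_singletonE card_0_eq finite_keys le_Suc_eq le_zero_eq One_nat_def)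
  then show "mo = 0 \<or> (\<exists>x. mo = Poly_Mapping.single x 1)"
  proof cases
    case (2 x)
    with deg pos have "Poly_Mapping.lookup mo x = 1" by simp
    with 2 have "mo = Poly_Mapping.single x 1"
      by (intro poly_mapping_eqI) (auto simp: lookup_single when_def in_keys_iff)
    then show ?thesis by blast
  qed simp
qed auto

lemma total_degree_le_1_iff:
  "total_degree p \<le> 1 \<longleftrightarrow> Poly_Mapping.keys p \<subseteq> insert 0 (range (\<lambda>x. Poly_Mapping.single x 1))"
proof -
  have "total_degree p \<le> 1 \<longleftrightarrow>
      (\<forall>mo\<in>Poly_Mapping.keys p. (\<Sum>x\<in>Poly_Mapping.keys mo. Poly_Mapping.lookup mo x) \<le> 1)"
    by (simp add: total_degree_def)
  then show ?thesis
    by (simp only: monomial_degree_le_1_iff) blast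
qed

lemma affine_poly_expansion:
  fixes p :: "('x::finite) cpoly"
  assumes "total_degree p \<le> 1"
  shows "p = pconst (Poly_Mapping.lookup p 0)
           + (\<Sum>x\<in>UNIV. pconst (Poly_Mapping.lookup p (Poly_Mapping.single x 1)) * pvar x)"
    (is "p = ?q")
proof (rule poly_mapping_eqI)
  fix mo
  have "Poly_Mapping.lookup ?q mo = (Poly_Mapping.lookup p 0 when mo = 0)
      + (\<Sum>x | Poly_Mapping.single x 1 = mo. Poly_Mapping.lookup p (Poly_Mapping.single x 1))"
    unfolding pconst_mult_pvar lookup_add lookup_sum_single[OF finite_UNIV]
    by (simp add: pconst_def lookup_single)
  also have "\<dots> = Poly_Mapping.lookup p mo"
  proof -
    consider "mo = 0" | x where "mo = Poly_Mapping.single x 1"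
      | "mo \<notin> insert 0 (range (\<lambda>x. Poly_Mapping.single x 1))"
      by blast
    then show ?thesis
    proof cases
      case 1
      then show ?thesis by simp
    next
      case (2 x)
      then have "{y. Poly_Mapping.single y (1::nat) = mo} = {x}"
        by auto
      with 2 show ?thesis by simp
    next
      case 3
      with assms have "mo \<notin> Poly_Mapping.keys p"
        unfolding total_degree_le_1_iff by blast
      with 3 show ?thesis by (simp add: in_keys_iff)
    qed
  qed
  finally show "Poly_Mapping.lookup p mo = Poly_Mapping.lookup ?q mo" ..
qed

lemma total_degree_binomial_span_le_1:
  "total_degree (\<Sum>(x, y)\<in>P. pconst (c (x, y)) * (pvar x - pvar y)) \<le> 1"
proof -
  let ?b = "\<lambda>(x, y). pconst (c (x, y)) * (pvar x - pvar y)"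
  have binomial_keys: "Poly_Mapping.keys (?b i) \<subseteq> range (\<lambda>x. Poly_Mapping.single x 1)" for i
    unfolding case_prod_beta right_diff_distrib pconst_mult_pvar
    by (rule order_trans[OF keys_diff]) auto
  have "Poly_Mapping.keys (sum ?b P) \<subseteq> range (\<lambda>x. Poly_Mapping.single x 1)"
    by (rule order_trans[OF keys_sum UN_least[OF binomial_keys]])
  then show ?thesis
    unfolding total_degree_le_1_iff by blast
qed

lemma peval_binomial_span_eq_0:
  assumes "\<And>x y. (x, y) \<in> P \<Longrightarrow> img x = img y"
  shows "peval img (\<Sum>(x, y)\<in>P. pconst (c (x, y)) * (pvar x - pvar y)) = 0"
  unfolding peval_sum
  by (rule sum.neutral) (auto simp: right_diff_distrib peval_diff peval_pconst_mult_pvar assms)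

lemma peval_affine_monomial_map:
  "peval (\<lambda>x. Poly_Mapping.single (m x) 1) (pconst a0 + (\<Sum>x\<in>A. pconst (a x) * pvar x))
     = pconst a0 + (\<Sum>x\<in>A. Poly_Mapping.single (m x) (a x))"
  by (simp add: peval_add peval_sum peval_pconst peval_pconst_mult_pvar pconst_mult_single)

lemma affine_kernel_imp_fibre_sums_0:
  fixes m :: "'x::finite \<Rightarrow> 'y \<Rightarrow>\<^sub>0 nat"
  assumes "\<And>x. m x \<noteq> 0"
    and "peval (\<lambda>x. Poly_Mapping.single (m x) 1) (pconst a0 + (\<Sum>x\<in>UNIV. pconst (a x) * pvar x)) = 0"
  shows "a0 = 0" and "(\<Sum>x | m x = k. a x) = 0"
proof -
  have coeff: "(a0 when k = 0) + (\<Sum>x | m x = k. a x) = 0" for k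
    using arg_cong[OF assms(2)[unfolded peval_affine_monomial_map], of "\<lambda>q. Poly_Mapping.lookup q k"]
    by (simp add: lookup_add pconst_def lookup_single lookup_sum_single)
  from coeff[of 0] assms(1) show "a0 = 0" by simp
  with coeff[of k] show "(\<Sum>x | m x = k. a x) = 0" by simp
qed

lemma binomial_span_of_zero_fibre_sums:
  fixes m :: "'x::finite \<Rightarrow> 'z"
  assumes "\<And>k. (\<Sum>x | m x = k. a x) = 0"
  shows "\<exists>c. (\<Sum>x\<in>UNIV. pconst (a x) * pvar x)
           = (\<Sum>(x, y)\<in>{(x, y). m x = m y}. pconst (c (x, y)) * (pvar x - pvar y))"
proof -
  define r where "r x = (SOME y. m y = m x)" for x
  have m_r: "m (r x) = m x" for x
    unfolding r_def by (rule someI) (rule refl)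
  have r_eq_iff: "r x = r x' \<longleftrightarrow> m x = m x'" for x x'
    by (metis m_r r_def)
  have reps_0: "(\<Sum>x\<in>UNIV. pconst (a x) * pvar (r x)) = 0"
  proof -
    have "(\<Sum>x\<in>UNIV. pconst (a x) * pvar (r x))
        = (\<Sum>y\<in>range r. \<Sum>x | r x = y. pconst (a x) * pvar (r x))"
      by (simp add: sum.image_gen[of UNIV _ r])
    also have "\<dots> = (\<Sum>y\<in>range r. pconst (\<Sum>x | r x = y. a x) * pvar y)"
      by (simp add: pconst_sum sum_distrib_right)
    also have "\<dots> = 0"
      by (rule sum.neutral) (auto simp: r_eq_iff assms)
    finally show ?thesis .
  qed
  define c where "c = (\<lambda>(x, y). if y = r x then a x else 0)"
  have "(\<Sum>(x, y)\<in>{(x, y). m x = m y}. pconst (c (x, y)) * (pvar x - pvar y))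
      = (\<Sum>(x, y)\<in>range (\<lambda>x. (x, r x)). pconst (c (x, y)) * (pvar x - pvar y))"
    by (rule sum.mono_neutral_right) (auto simp: c_def m_r)
  also have "\<dots> = (\<Sum>x\<in>UNIV. pconst (a x) * (pvar x - pvar (r x)))"
    by (subst sum.reindex) (auto intro: injI simp: c_def)
  also have "\<dots> = (\<Sum>x\<in>UNIV. pconst (a x) * pvar x)"
    using reps_0 by (simp add: right_diff_distrib sum_subtractf)
  finally have "(\<Sum>x\<in>UNIV. pconst (a x) * pvar x)
      = (\<Sum>(x, y)\<in>{(x, y). m x = m y}. pconst (c (x, y)) * (pvar x - pvar y))"
    by (rule sym)
  then show ?thesis by (rule exI[of _ c])
qed

theorem linear_part_of_monomial_map_kernel:
  fixes m :: "'x::finite \<Rightarrow> 'y \<Rightarrow>\<^sub>0 nat"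
  assumes "\<And>x. m x \<noteq> 0"
  shows "{p. peval (\<lambda>x. Poly_Mapping.single (m x) 1) p = 0 \<and> total_degree p \<le> 1}
       = {p. \<exists>c. p = (\<Sum>(x, y)\<in>{(x, y). m x = m y}. pconst (c (x, y)) * (pvar x - pvar y))}"
proof (intro subset_antisym subsetI)
  fix p
  assume "p \<in> {p. peval (\<lambda>x. Poly_Mapping.single (m x) 1) p = 0 \<and> total_degree p \<le> 1}"
  then have ker: "peval (\<lambda>x. Poly_Mapping.single (m x) 1) p = 0" and deg: "total_degree p \<le> 1"
    by simp_all
  define a0 where "a0 = Poly_Mapping.lookup p 0"
  define a where "a x = Poly_Mapping.lookup p (Poly_Mapping.single x 1)" for x
  have p_eq: "p = pconst a0 + (\<Sum>x\<in>UNIV. pconst (a x) * pvar x)"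
    unfolding a0_def a_def by (rule affine_poly_expansion[OF deg])
  note fibres = affine_kernel_imp_fibre_sums_0[OF assms ker[unfolded p_eq]]
  show "p \<in> {p. \<exists>c. p = (\<Sum>(x, y)\<in>{(x, y). m x = m y}. pconst (c (x, y)) * (pvar x - pvar y))}"
    using binomial_span_of_zero_fibre_sums[OF fibres(2)] fibres(1) p_eq by simp
next
  fix p
  assume "p \<in> {p. \<exists>c. p = (\<Sum>(x, y)\<in>{(x, y). m x = m y}. pconst (c (x, y)) * (pvar x - pvar y))}"
  then obtain c where p: "p = (\<Sum>(x, y)\<in>{(x, y). m x = m y}. pconst (c (x, y)) * (pvar x - pvar y))"
    by blast
  have "peval (\<lambda>x. Poly_Mapping.single (m x) 1) p = 0"
    unfolding p by (rule peval_binomial_span_eq_0) simp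
  moreover have "total_degree p \<le> 1"
    unfolding p by (rule total_degree_binomial_span_le_1)
  ultimately show "p \<in> {p. peval (\<lambda>x. Poly_Mapping.single (m x) 1) p = 0 \<and> total_degree p \<le> 1}"
    by simp
qed

definition graph_monomial :: "'e set \<Rightarrow> ('e \<Rightarrow> 'l) \<Rightarrow> ('e \<times> 'l \<Rightarrow>\<^sub>0 nat)" where
  "graph_monomial E f = (\<Sum>e\<in>E. Poly_Mapping.single (e, f e) 1)"

lemma lookup_graph_monomial:
  assumes "finite E"
  shows "Poly_Mapping.lookup (graph_monomial E f) (e, l) = (if e \<in> E \<and> f e = l then 1 else 0)"
proof -
  have "{e'. e' \<in> E \<and> (e', f e') = (e, l)} = (if e \<in> E \<and> f e = l then {e} else {})"
    by auto
  then show ?thesis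
    by (simp add: graph_monomial_def lookup_sum_single[OF assms])
qed

lemma graph_monomial_eq_iff:
  assumes "finite E"
  shows "graph_monomial E f = graph_monomial E f' \<longleftrightarrow> (\<forall>e\<in>E. f e = f' e)"
proof
  assume eq: "graph_monomial E f = graph_monomial E f'"
  show "\<forall>e\<in>E. f e = f' e"
  proof
    fix e assume "e \<in> E"
    then have "Poly_Mapping.lookup (graph_monomial E f') (e, f e) = 1"
      using eq[symmetric] by (simp add: lookup_graph_monomial[OF assms])
    with \<open>e \<in> E\<close> show "f e = f' e"
      by (simp add: lookup_graph_monomial[OF assms] split: if_split_asm)
  qed
qed (simp add: graph_monomial_def)

lemma graph_monomial_neq_0:
  assumes "finite E" "E \<noteq> {}"
  shows "graph_monomial E f \<noteq> 0"
proof -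
  obtain e where "e \<in> E" using assms(2) by blast
  then have "Poly_Mapping.lookup (graph_monomial E f) (e, f e) = 1"
    by (simp add: lookup_graph_monomial[OF assms(1)])
  then show ?thesis by auto
qed

lemma tree_with_root_edge_finite_edges:
  assumes "tree_with_root_edge V E \<rho> lf"
  shows "finite E"
proof -
  have tree: "is_tree V E" using assms by (simp add: tree_with_root_edge_def)
  have "E \<subseteq> Pow V"
  proof
    fix e assume "e \<in> E"
    with tree obtain u v where "u \<in> V" "v \<in> V" "e = {u, v}"
      unfolding is_tree_def by meson
    then show "e \<in> Pow V" by auto
  qed
  moreover have "finite V" using tree by (simp add: is_tree_def)
  ultimately show ?thesis by (meson finite_Pow_iff finite_subset)
qed

lemma tree_with_root_edge_edges_nonempty:
  assumes "tree_with_root_edge V E \<rho> lf"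
  shows "E \<noteq> {}"
  using assms by (auto simp: tree_with_root_edge_def vdeg_def)

theorem proposition3p1:
  fixes V :: "'v set" and E :: "'v set set" and \<rho> :: 'v
    and lf :: "'m::finite \<Rightarrow> 'v"
    and L :: "'g::{ab_group_add, finite} \<Rightarrow> 'l::finite"
  assumes "tree_with_root_edge V E \<rho> lf"
  defines "P \<equiv> {(g, g'). \<forall>e\<in>E. L (hmap E \<rho> lf g e) = L (hmap E \<rho> lf g' e)}"
  shows "{p \<in> J_TL E \<rho> lf L. total_degree p \<le> 1}
       = {p. \<exists>c :: ('m \<Rightarrow> 'g) \<times> ('m \<Rightarrow> 'g) \<Rightarrow> complex.
              p = (\<Sum>(g, g')\<in>P. pconst (c (g, g')) * (pvar g - pvar g'))}"
proof -
  define mg where "mg g = graph_monomial E (\<lambda>e. L (hmap E \<rho> lf g e))" for g :: "'m \<Rightarrow> 'g"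
  have fin: "finite E" and ne: "E \<noteq> {}"
    using assms(1) by (rule tree_with_root_edge_finite_edges, rule tree_with_root_edge_edges_nonempty)
  have phi: "phiTL E \<rho> lf L = peval (\<lambda>g. Poly_Mapping.single (mg g) 1)"
    unfolding phiTL_def mg_def graph_monomial_def pvar_def prod_single_one ..
  have P_eq: "P = {(g, g'). mg g = mg g'}"
    unfolding P_def mg_def graph_monomial_eq_iff[OF fin] ..
  have mg_neq_0: "mg g \<noteq> 0" for g
    unfolding mg_def using fin ne by (rule graph_monomial_neq_0)
  have "{p \<in> J_TL E \<rho> lf L. total_degree p \<le> 1}
      = {p. peval (\<lambda>g. Poly_Mapping.single (mg g) 1) p = 0 \<and> total_degree p \<le> 1}"
    unfolding J_TL_def phi by blast
  also have "\<dots> = {p. \<exists>c. p = (\<Sum>(g, g')\<in>{(g, g'). mg g = mg g'}. pconst (c (g, g')) * (pvar g - pvar g'))}"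
    using mg_neq_0 by (rule linear_part_of_monomial_map_kernel)
  finally show ?thesis unfolding P_eq .
qed

end
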